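(* Let $\mathcal{Z}^\omega$ be the set of germs at $o=(0,0)$ of maps $F(x,y)=(f(x,y),x,y)$ into $\mathbf{R}^3_1$, with $f$ a real analytic function germ at $o$, $f(0,0)=0$, $f_x(0,0)=0$, $f_y(0,0)=1$, such that $A_F\equiv 0$, and let $\Lambda^\omega$ be the set of such germs (same normalizations) with $B_F\equiv 0$. For $F$ let $\gamma_F(x):=(f(x,0),f_y(x,0))$. Then $$\Lambda^\omega=\Big\{F\in\mathcal{Z}^\omega\ ;\ \gamma_F=\big(\psi,\sqrt{1-\dot\psi^2}\big)\ \text{for some }\psi\in C^\omega_o(\mathbf{R},0_2)\Big\},$$ where $\dot\psi=d\psi/dx$ and $C^\omega_o(\mathbf{R},0_2)$ is the set of germs at $0$ of real analytic functions $\psi$ with $\psi(0)=\psi'(0)=0$.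
   Context: $\mathbf{R}^3_1$ is Lorentz–Minkowski 3-space with coordinates $(t,x,y)$ and inner product $-dt^2+dx^2+dy^2$. For $F(x,y)=(f(x,y),x,y)$, $B_F:=1-f_x^2-f_y^2$ and $A_F:=(1-f_x^2)f_{yy}+2f_xf_yf_{xy}+(1-f_y^2)f_{xx}$. *)

theory Defs
  imports "HOL-Analysis.Analysis"
begin

text \<open>Real analyticity of a function of two real variables at a point: on some open
  square around the point it is the (unconditionally, hence absolutely, convergent)
  sum of a double power series centred at the point.\<close>
definition real_analytic_at2 :: "(real \<times> real \<Rightarrow> real) \<Rightarrow> real \<times> real \<Rightarrow> bool" where
  "real_analytic_at2 f p \<longleftrightarrow>
     (\<exists>r>0. \<exists>c :: nat \<Rightarrow> nat \<Rightarrow> real. \<forall>x y. \<bar>x - fst p\<bar> < r \<and> \<bar>y - snd p\<bar> < r \<longrightarrow>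
        ((\<lambda>(i, j). c i j * (x - fst p) ^ i * (y - snd p) ^ j) has_sum f (x, y)) UNIV)"

definition real_analytic_at1 :: "(real \<Rightarrow> real) \<Rightarrow> real \<Rightarrow> bool" where
  "real_analytic_at1 g a \<longleftrightarrow>
     (\<exists>r>0. \<exists>c :: nat \<Rightarrow> real. \<forall>x. \<bar>x - a\<bar> < r \<longrightarrow> (\<lambda>n. c n * (x - a) ^ n) sums g x)"

definition pdx :: "(real \<times> real \<Rightarrow> real) \<Rightarrow> real \<times> real \<Rightarrow> real" where
  "pdx f = (\<lambda>(x, y). deriv (\<lambda>s. f (s, y)) x)"

definition pdy :: "(real \<times> real \<Rightarrow> real) \<Rightarrow> real \<times> real \<Rightarrow> real" where
  "pdy f = (\<lambda>(x, y). deriv (\<lambda>t. f (x, t)) y)"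

definition B_F :: "(real \<times> real \<Rightarrow> real) \<Rightarrow> real \<times> real \<Rightarrow> real" where
  "B_F f p = 1 - (pdx f p)\<^sup>2 - (pdy f p)\<^sup>2"

definition A_F :: "(real \<times> real \<Rightarrow> real) \<Rightarrow> real \<times> real \<Rightarrow> real" where
  "A_F f p = (1 - (pdx f p)\<^sup>2) * pdy (pdy f) p
           + 2 * pdx f p * pdy f p * pdy (pdx f) p
           + (1 - (pdy f p)\<^sup>2) * pdx (pdx f) p"

definition normalized_germ :: "(real \<times> real \<Rightarrow> real) \<Rightarrow> bool" where
  "normalized_germ f \<longleftrightarrow> real_analytic_at2 f (0, 0) \<and> f (0, 0) = 0
      \<and> pdx f (0, 0) = 0 \<and> pdy f (0, 0) = 1"

definition in_Z :: "(real \<times> real \<Rightarrow> real) \<Rightarrow> bool" where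
  "in_Z f \<longleftrightarrow> normalized_germ f \<and> (\<forall>\<^sub>F p in nhds (0, 0). A_F f p = 0)"

definition in_Lambda :: "(real \<times> real \<Rightarrow> real) \<Rightarrow> bool" where
  "in_Lambda f \<longleftrightarrow> normalized_germ f \<and> (\<forall>\<^sub>F p in nhds (0, 0). B_F f p = 0)"

definition in_C_omega_02 :: "(real \<Rightarrow> real) \<Rightarrow> bool" where
  "in_C_omega_02 \<psi> \<longleftrightarrow> real_analytic_at1 \<psi> 0 \<and> \<psi> 0 = 0 \<and> deriv \<psi> 0 = 0"

definition gamma_F :: "(real \<times> real \<Rightarrow> real) \<Rightarrow> real \<Rightarrow> real \<times> real" where
  "gamma_F f x = (f (x, 0), pdy f (x, 0))"

end

theory Submission
  imports Defs
begin

text \<open>Differentiating \<open>B_F = 1 - f_x\<^sup>2 - f_y\<^sup>2\<close> gives the identity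
  \<open>A_F = (f_xx + f_yy) B_F - (f_x (B_F)_x + f_y (B_F)_y)/2\<close>. Hence \<open>B_F \<equiv> 0\<close> forces \<open>A_F \<equiv> 0\<close>;
  conversely, if \<open>A_F \<equiv> 0\<close> then \<open>B_F\<close> solves a linear first order equation whose \<open>\<partial>_y\<close>-coefficient
  \<open>-f_y/2\<close> does not vanish at \<open>o\<close>, so the line \<open>y = 0\<close> is non-characteristic and an analytic
  solution vanishing on it vanishes identically (its Taylor coefficients are determined row by
  row). On \<open>y = 0\<close>, near \<open>o\<close> where \<open>f_y > 0\<close>, the condition \<open>B_F = 0\<close> says exactly
  \<open>f_y(x,0) = \<surd>(1 - f_x(x,0)\<^sup>2)\<close>, i.e. \<open>\<gamma>_F = (\<psi>, \<surd>(1 - \<psi>'\<^sup>2))\<close> with \<open>\<psi>(x) = f(x,0)\<close>.\<close>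

section \<open>Double power series on a square\<close>

definition has_powser2 :: "(nat \<Rightarrow> nat \<Rightarrow> real) \<Rightarrow> real \<Rightarrow> (real \<times> real \<Rightarrow> real) \<Rightarrow> bool" where
  "has_powser2 c r F \<longleftrightarrow> (\<forall>x y. \<bar>x\<bar> < r \<longrightarrow> \<bar>y\<bar> < r \<longrightarrow>
      ((\<lambda>(i,j). c i j * x ^ i * y ^ j) has_sum F (x, y)) UNIV)"

lemma has_powser2D:
  "has_powser2 c r F \<Longrightarrow> \<bar>x\<bar> < r \<Longrightarrow> \<bar>y\<bar> < r \<Longrightarrow>
     ((\<lambda>(i,j). c i j * x ^ i * y ^ j) has_sum F (x, y)) UNIV"
  by (auto simp: has_powser2_def)

lemma real_analytic_at2_origin_has_powser2:
  "real_analytic_at2 f (0,0) \<Longrightarrow> \<exists>r>0. \<exists>c. has_powser2 c r f"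
  by (auto simp: real_analytic_at2_def has_powser2_def)

lemma has_powser2_cong:
  "has_powser2 c r F \<Longrightarrow> (\<And>x y. \<bar>x\<bar> < r \<Longrightarrow> \<bar>y\<bar> < r \<Longrightarrow> F (x,y) = G (x,y)) \<Longrightarrow> has_powser2 c r G"
  by (auto simp: has_powser2_def)

lemma has_powser2_mono: "has_powser2 c r F \<Longrightarrow> r' \<le> r \<Longrightarrow> has_powser2 c r' F"
  by (auto simp: has_powser2_def)

lemma has_powser2_add:
  assumes "has_powser2 c r F" "has_powser2 d r G"
  shows "has_powser2 (\<lambda>i j. c i j + d i j) r (\<lambda>z. F z + G z)"
  unfolding has_powser2_def
proof (intro allI impI)
  fix x y :: real assume "\<bar>x\<bar> < r" "\<bar>y\<bar> < r"
  with assms have "((\<lambda>(i,j). c i j * x ^ i * y ^ j) has_sum F (x, y)) UNIV"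
      "((\<lambda>(i,j). d i j * x ^ i * y ^ j) has_sum G (x, y)) UNIV"
    by (auto dest: has_powser2D)
  from has_sum_add[OF this]
  show "((\<lambda>(i,j). (c i j + d i j) * x ^ i * y ^ j) has_sum F (x, y) + G (x,y)) UNIV"
    by (simp add: case_prod_unfold algebra_simps)
qed

lemma has_powser2_cmult:
  assumes "has_powser2 c r F"
  shows "has_powser2 (\<lambda>i j. a * c i j) r (\<lambda>z. a * F z)"
  unfolding has_powser2_def
proof (intro allI impI)
  fix x y :: real assume "\<bar>x\<bar> < r" "\<bar>y\<bar> < r"
  with assms have "((\<lambda>(i,j). c i j * x ^ i * y ^ j) has_sum F (x, y)) UNIV"
    by (auto dest: has_powser2D)
  from has_sum_cmult_right[OF this, of a]
  show "((\<lambda>(i,j). (a * c i j) * x ^ i * y ^ j) has_sum a * F (x, y)) UNIV"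
    by (simp add: case_prod_unfold algebra_simps)
qed

lemma has_powser2_diff:
  "has_powser2 c r F \<Longrightarrow> has_powser2 d r G \<Longrightarrow>
     has_powser2 (\<lambda>i j. c i j - d i j) r (\<lambda>z. F z - G z)"
  using has_powser2_add[of c r F "\<lambda>i j. (-1) * d i j" "\<lambda>z. (-1) * G z"]
    has_powser2_cmult[of d r G "-1"]
  by simp

lemma has_sum_single_point: "((\<lambda>z. if z = a then v else 0) has_sum (v::real)) UNIV"
proof -
  have "((\<lambda>z. if z = a then v else 0) has_sum v) {a}"
    by (rule has_sum_finiteI) simp_all
  thus ?thesis by (rule has_sum_cong_neutral[THEN iffD1, rotated -1]) auto
qed

lemma infsum_powser_at_0: "(\<Sum>\<^sub>\<infinity>j. c j * (0::real) ^ j) = c 0"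
proof -
  have "(\<lambda>j. c j * (0::real) ^ j) = (\<lambda>j. if j = 0 then c 0 else 0)" by (auto simp: fun_eq_iff)
  thus ?thesis using has_sum_single_point[of "0::nat" "c 0"] infsumI by metis
qed

definition one_coeffs2 :: "nat \<Rightarrow> nat \<Rightarrow> real" where
  "one_coeffs2 i j = (if i = 0 \<and> j = 0 then 1 else 0)"

lemma has_powser2_one: "has_powser2 one_coeffs2 r (\<lambda>_. 1)"
  unfolding has_powser2_def
proof (intro allI impI)
  fix x y :: real
  have "(\<lambda>(i,j). one_coeffs2 i j * x ^ i * y ^ j) = (\<lambda>z. if z = (0::nat,0::nat) then 1 else 0)"
    by (auto simp: one_coeffs2_def fun_eq_iff)
  thus "((\<lambda>(i,j). one_coeffs2 i j * x ^ i * y ^ j) has_sum 1) UNIV"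
    using has_sum_single_point by simp
qed

lemma has_powser2_at_origin:
  assumes "has_powser2 c r F" "0 < r"
  shows "F (0,0) = c 0 0"
proof -
  have "((\<lambda>(i,j). c i j * 0 ^ i * 0 ^ j) has_sum F (0, 0)) UNIV"
    using has_powser2D[OF assms(1), of 0 0] assms(2) by simp
  moreover have "(\<lambda>(i,j). c i j * (0::real) ^ i * 0 ^ j) = (\<lambda>z. if z = (0::nat,0::nat) then c 0 0 else 0)"
    by (auto simp: fun_eq_iff)
  ultimately show ?thesis
    using has_sum_single_point[of "(0::nat,0::nat)" "c 0 0"] has_sum_unique by fastforce
qed

lemma has_powser2_row_sums:
  assumes "has_powser2 c r F" "\<bar>y\<bar> < r"
  shows "((\<lambda>j. c i j * y^j) has_sum (\<Sum>\<^sub>\<infinity>j. c i j * y^j)) UNIV"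
    and "\<bar>x\<bar> < r \<Longrightarrow> (\<lambda>i. (\<Sum>\<^sub>\<infinity>j. c i j * y^j) * x^i) sums F (x,y)"
proof -
  have r: "r > 0" using assms(2) by linarith
  have row: "(\<lambda>j. c i j * y^j) summable_on UNIV" for i
  proof -
    have "((\<lambda>(i,j). c i j * (r/2) ^ i * y ^ j) has_sum F (r/2, y)) UNIV"
      using has_powser2D[OF assms(1), of "r/2" y] r assms(2) by simp
    hence "(\<lambda>(i,j). c i j * (r/2) ^ i * y ^ j) summable_on Sigma UNIV (\<lambda>_. UNIV)"
      using has_sum_imp_summable by force
    hence "(\<lambda>j. c i j * (r/2) ^ i * y ^ j) summable_on UNIV"
      by (rule summable_on_SigmaD1[where f = "\<lambda>i j. c i j * (r/2) ^ i * y ^ j"]) auto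
    hence "(\<lambda>j. (1 / (r/2)^i) * (c i j * (r/2) ^ i * y ^ j)) summable_on UNIV"
      by (rule summable_on_cmult_right)
    moreover have "(\<lambda>j. (1 / (r/2)^i) * (c i j * (r/2) ^ i * y ^ j)) = (\<lambda>j. c i j * y^j)"
      using r by (auto simp: fun_eq_iff)
    ultimately show ?thesis by simp
  qed
  thus "((\<lambda>j. c i j * y^j) has_sum (\<Sum>\<^sub>\<infinity>j. c i j * y^j)) UNIV" by simp
  assume x: "\<bar>x\<bar> < r"
  have "((\<lambda>(i,j). c i j * x ^ i * y ^ j) has_sum F (x, y)) (Sigma UNIV (\<lambda>_. UNIV))"
    using has_powser2D[OF assms(1) x assms(2)] by simp
  hence "((\<lambda>i. (\<Sum>\<^sub>\<infinity>j. c i j * y^j) * x^i) has_sum F (x,y)) UNIV"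
  proof (rule has_sum_Sigma')
    fix i :: nat
    from has_sum_cmult_right[OF row[of i, THEN has_sum_infsum], of "x^i"]
    show "((\<lambda>j. (\<lambda>(i,j). c i j * x ^ i * y ^ j) (i, j)) has_sum (\<Sum>\<^sub>\<infinity>j. c i j * y^j) * x^i) UNIV"
      by (simp add: algebra_simps)
  qed
  thus "(\<lambda>i. (\<Sum>\<^sub>\<infinity>j. c i j * y^j) * x^i) sums F (x,y)"
    by (rule has_sum_imp_sums)
qed

lemma has_powser2_axis:
  "has_powser2 c r F \<Longrightarrow> \<bar>x\<bar> < r \<Longrightarrow> (\<lambda>i. c i 0 * x^i) sums F (x,0)"
  using has_powser2_row_sums(2)[of c r F 0 x] by (simp add: infsum_powser_at_0)

lemma powser_sums_zero_imp_coeffs_zero: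
  fixes a :: "nat \<Rightarrow> real"
  assumes r: "r > 0" and s: "\<And>x. \<bar>x\<bar> < r \<Longrightarrow> (\<lambda>n. a n * x^n) sums 0"
  shows "a n = 0"
proof (induction n rule: less_induct)
  case (less n)
  define g where "g x = (\<Sum>k. a (k+n) * x^k)" for x
  have tail: "(\<lambda>k. a (k+n) * x^k) sums 0" if "x \<noteq> 0" "\<bar>x\<bar> < r" for x
  proof -
    have "(\<lambda>i. a (i+n) * x^(i+n)) sums (0 - (\<Sum>i<n. a i * x^i))"
      using sums_split_initial_segment[OF s[OF that(2)]] .
    moreover have "(\<Sum>i<n. a i * x^i) = 0" using less.IH by simp
    ultimately have "(\<lambda>i. a (i+n) * x^(i+n) / x^n) sums (0 / x^n)"
      by (intro sums_divide) simp
    moreover have "(\<lambda>i. a (i+n) * x^(i+n) / x^n) = (\<lambda>k. a (k+n) * x^k)"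
      using that(1) by (auto simp: fun_eq_iff power_add)
    ultimately show ?thesis by simp
  qed
  have "summable (\<lambda>k. a (k+n) * (r/2)^k)" using tail[of "r/2"] r by (auto simp: sums_iff)
  hence "isCont g 0" unfolding g_def by (rule isCont_powser) (use r in simp)
  moreover have "eventually (\<lambda>x. g x = 0) (at (0::real))"
    unfolding eventually_at using r tail
    by (auto intro!: exI[of _ r] simp: dist_real_def g_def sums_iff)
  ultimately have "g 0 = 0"
    by (metis isCont_def at_neq_bot tendsto_eventually tendsto_unique)
  moreover have "g 0 = a n" unfolding g_def using powser_zero[of "\<lambda>k. a (k+n)"] by simp
  ultimately show ?case by simp
qed

lemma has_powser2_zero_coeffs:
  assumes "has_powser2 c r (\<lambda>_. 0)" "r > 0"
  shows "c i j = 0"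
proof -
  have "(\<Sum>\<^sub>\<infinity>j. c i j * y^j) = 0" if y: "\<bar>y\<bar> < r" for y
    using powser_sums_zero_imp_coeffs_zero[OF assms(2) has_powser2_row_sums(2)[OF assms(1) y]] .
  hence "(\<lambda>j. c i j * y^j) sums 0" if y: "\<bar>y\<bar> < r" for y
    using has_powser2_row_sums(1)[OF assms(1) y, of i] y has_sum_imp_sums by fastforce
  thus ?thesis using powser_sums_zero_imp_coeffs_zero[OF assms(2)] by blast
qed

definition diffs_x :: "(nat \<Rightarrow> nat \<Rightarrow> real) \<Rightarrow> nat \<Rightarrow> nat \<Rightarrow> real" where
  "diffs_x c i j = of_nat (Suc i) * c (Suc i) j"

definition diffs_y :: "(nat \<Rightarrow> nat \<Rightarrow> real) \<Rightarrow> nat \<Rightarrow> nat \<Rightarrow> real" where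
  "diffs_y c i j = of_nat (Suc j) * c i (Suc j)"

lemma Suc_mult_power_bounded:
  fixes t :: real assumes "0 \<le> t" "t < 1"
  shows "\<exists>K. \<forall>n. of_nat (Suc n) * t^n \<le> K"
proof -
  have "(\<lambda>n. of_nat n * t ^ n) \<longlonglongrightarrow> 0" using powser_times_n_limit_0[of t] assms by simp
  then obtain K where K: "\<And>n. norm (of_nat n * t ^ n) \<le> K"
    by (metis Bseq_def convergentI convergent_imp_Bseq)
  have "of_nat (Suc n) * t^n \<le> 1 + K" for n
  proof -
    have "t^n \<le> 1" using assms by (simp add: power_le_one)
    with K[of n] show ?thesis by (simp add: algebra_simps)
  qed
  thus ?thesis by blast
qed

text \<open>The differentiated series is dominated, up to the factor \<open>K/\<rho>\<close>, by the shifted absolute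
  series at the point \<open>(\<rho>, y)\<close> with \<open>|x| < \<rho> < r\<close>.\<close>
lemma has_powser2_diffs_x_summable:
  assumes F: "has_powser2 c r F" and x: "\<bar>x\<bar> < r" and y: "\<bar>y\<bar> < r"
  shows "(\<lambda>(i,j). diffs_x c i j * x ^ i * y ^ j) summable_on UNIV"
proof -
  define \<rho> where "\<rho> = (\<bar>x\<bar> + r) / 2"
  have \<rho>: "\<bar>x\<bar> < \<rho>" "\<rho> < r" "0 < \<rho>" using x by (auto simp: \<rho>_def)
  define g where "g = (\<lambda>(i,j). norm (c i j * \<rho> ^ i * y ^ j))"
  have "(\<lambda>(i,j). c i j * \<rho> ^ i * y ^ j) summable_on UNIV"
    using has_powser2D[OF F, of \<rho> y] \<rho> y has_sum_imp_summable by auto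
  hence "(\<lambda>z. norm ((\<lambda>(i,j). c i j * \<rho> ^ i * y ^ j) z)) summable_on UNIV"
    using summable_on_iff_abs_summable_on_real by blast
  hence "g summable_on UNIV" unfolding g_def by (simp add: case_prod_unfold)
  hence "g summable_on (\<lambda>(i,j). (Suc i, j)) ` UNIV" using summable_on_subset by blast
  hence "(\<lambda>(i,j). g (Suc i, j)) summable_on UNIV"
    by (subst (asm) summable_on_reindex) (auto simp: inj_on_def o_def case_prod_unfold)
  from summable_on_cmult_right[OF this, of "K/\<rho>" for K]
  have dominant: "(\<lambda>(i,j). (K / \<rho>) * g (Suc i, j)) summable_on UNIV" for K
    by (simp add: case_prod_unfold)
  obtain K where K: "\<And>n. of_nat (Suc n) * (\<bar>x\<bar>/\<rho>)^n \<le> K"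
    using Suc_mult_power_bounded[of "\<bar>x\<bar>/\<rho>"] \<rho> by auto
  have bound: "norm (diffs_x c i j * x ^ i * y ^ j) \<le> (K / \<rho>) * g (Suc i, j)" for i j
  proof -
    have "of_nat (Suc i) * \<bar>x\<bar>^i = of_nat (Suc i) * (\<bar>x\<bar>/\<rho>)^i * \<rho>^i"
      using \<rho> by (simp add: power_divide)
    also have "\<dots> \<le> K * \<rho>^i"
      using K[of i] \<rho> by (intro mult_right_mono) auto
    finally have "of_nat (Suc i) * \<bar>x\<bar>^i * (\<bar>c (Suc i) j\<bar> * \<bar>y\<bar>^j) \<le> K * \<rho>^i * (\<bar>c (Suc i) j\<bar> * \<bar>y\<bar>^j)"
      by (intro mult_right_mono) auto
    moreover have "norm (diffs_x c i j * x ^ i * y ^ j) = of_nat (Suc i) * \<bar>x\<bar>^i * (\<bar>c (Suc i) j\<bar> * \<bar>y\<bar>^j)"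
      by (simp add: diffs_x_def abs_mult power_abs del: of_nat_Suc)
    moreover have "(K / \<rho>) * g (Suc i, j) = K * \<rho>^i * (\<bar>c (Suc i) j\<bar> * \<bar>y\<bar>^j)"
      using \<rho> by (simp add: g_def abs_mult power_abs)
    ultimately show ?thesis by simp
  qed
  have "(\<lambda>z. norm ((\<lambda>(i,j). diffs_x c i j * x ^ i * y ^ j) z)) summable_on UNIV"
    by (rule Infinite_Sum.abs_summable_on_comparison_test'[OF dominant[of K]]) (use bound in auto)
  thus ?thesis using abs_summable_summable by blast
qed

text \<open>The differentiated double series is identified with the termwise derivative of the
  row-sum power series in \<open>x\<close>.\<close>
lemma has_powser2_pdx_at:
  assumes F: "has_powser2 c r F" and x: "\<bar>x\<bar> < r" and y: "\<bar>y\<bar> < r"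
  shows "((\<lambda>(i,j). diffs_x c i j * x ^ i * y ^ j) has_sum pdx F (x, y)) UNIV"
    and "((\<lambda>s. F(s,y)) has_real_derivative pdx F (x,y)) (at x)"
proof -
  define \<rho> where "\<rho> = (\<bar>x\<bar> + r) / 2"
  have \<rho>: "\<bar>x\<bar> < \<rho>" "\<rho> < r" "0 < \<rho>" using x by (auto simp: \<rho>_def)
  obtain S where hS: "((\<lambda>(i,j). diffs_x c i j * x ^ i * y ^ j) has_sum S) (Sigma UNIV (\<lambda>_. UNIV))"
    using has_powser2_diffs_x_summable[OF F x y] by (auto simp: summable_on_def)
  define a where "a i = (\<Sum>\<^sub>\<infinity>j. c i j * y^j)" for i
  have row: "(\<lambda>i. a i * s^i) sums F (s,y)" if "\<bar>s\<bar> < r" for s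
    using has_powser2_row_sums(2)[OF F y that] by (simp add: a_def)
  have "((\<lambda>i. diffs a i * x^i) has_sum S) UNIV"
  proof (rule has_sum_Sigma'[OF hS])
    fix i :: nat
    have "((\<lambda>j. c (Suc i) j * y^j) has_sum a (Suc i)) UNIV"
      using has_powser2_row_sums(1)[OF F y] by (simp add: a_def)
    from has_sum_cmult_right[OF this, of "of_nat (Suc i) * x^i"]
    show "((\<lambda>j. (\<lambda>(i,j). diffs_x c i j * x ^ i * y ^ j) (i, j)) has_sum diffs a i * x^i) UNIV"
      by (simp add: diffs_x_def diffs_def algebra_simps)
  qed
  hence "(\<lambda>i. diffs a i * x^i) sums S" by (rule has_sum_imp_sums)
  moreover have "summable (\<lambda>i. a i * \<rho>^i)" using row[of \<rho>] \<rho> by (auto simp: sums_iff)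
  ultimately have "DERIV (\<lambda>s. \<Sum>i. a i * s^i) x :> S"
    using termdiffs_strong[of a \<rho> x] \<rho> by (simp add: sums_iff)
  moreover have "open {s::real. \<bar>s\<bar> < r}"
    using open_ball[of "0::real" r] by (simp add: ball_def dist_real_def)
  ultimately have D: "((\<lambda>s. F(s,y)) has_real_derivative S) (at x)"
    by (rule has_field_derivative_transform_within_open[where S = "{s. \<bar>s\<bar> < r}"])
       (use x row in \<open>auto simp: sums_iff\<close>)
  hence "pdx F (x,y) = S" unfolding pdx_def by (simp add: DERIV_imp_deriv)
  with D hS show "((\<lambda>s. F(s,y)) has_real_derivative pdx F (x,y)) (at x)"
    and "((\<lambda>(i,j). diffs_x c i j * x ^ i * y ^ j) has_sum pdx F (x, y)) UNIV" by simp_all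
qed

lemma has_powser2_pdx: "has_powser2 c r F \<Longrightarrow> has_powser2 (diffs_x c) r (pdx F)"
  using has_powser2_pdx_at(1) unfolding has_powser2_def by blast

lemma has_sum_swap_pair:
  "((\<lambda>(i,j). f i j) has_sum S) UNIV \<Longrightarrow> ((\<lambda>(i,j). f j i) has_sum S) UNIV"
proof -
  assume "((\<lambda>(i,j). f i j) has_sum S) UNIV"
  hence "((\<lambda>(i,j). f i j) has_sum S) (UNIV \<times> UNIV)" by simp
  hence "((\<lambda>(x,y). (\<lambda>(i,j). f i j) (y,x)) has_sum S) (UNIV \<times> UNIV)"
    by (subst (asm) has_sum_swap)
  thus ?thesis by simp
qed

lemma has_powser2_swap:
  assumes "has_powser2 c r F"
  shows "has_powser2 (\<lambda>i j. c j i) r (\<lambda>z. F (snd z, fst z))"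
  unfolding has_powser2_def
proof (intro allI impI)
  fix x y :: real assume "\<bar>x\<bar> < r" "\<bar>y\<bar> < r"
  hence "((\<lambda>(i,j). c i j * y ^ i * x ^ j) has_sum F (y, x)) UNIV"
    using has_powser2D[OF assms] by auto
  from has_sum_swap_pair[OF this]
  show "((\<lambda>(i, j). c j i * x ^ i * y ^ j) has_sum F (snd (x, y), fst (x, y))) UNIV"
    by (simp add: algebra_simps)
qed

lemma has_powser2_pdy_at:
  assumes F: "has_powser2 c r F" and x: "\<bar>x\<bar> < r" and y: "\<bar>y\<bar> < r"
  shows "((\<lambda>(i,j). diffs_y c i j * x ^ i * y ^ j) has_sum pdy F (x, y)) UNIV"
    and "((\<lambda>t. F(x,t)) has_real_derivative pdy F (x,y)) (at y)"
proof -
  have swap: "pdy F (x,y) = pdx (\<lambda>z. F (snd z, fst z)) (y,x)" by (simp add: pdx_def pdy_def)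
  show "((\<lambda>t. F(x,t)) has_real_derivative pdy F (x,y)) (at y)"
    using has_powser2_pdx_at(2)[OF has_powser2_swap[OF F] y x] unfolding swap by simp
  have "((\<lambda>(i,j). diffs_x (\<lambda>i j. c j i) i j * y ^ i * x ^ j) has_sum pdy F (x, y)) UNIV"
    using has_powser2_pdx_at(1)[OF has_powser2_swap[OF F] y x] unfolding swap .
  from has_sum_swap_pair[OF this]
  show "((\<lambda>(i,j). diffs_y c i j * x ^ i * y ^ j) has_sum pdy F (x, y)) UNIV"
    by (simp add: diffs_x_def diffs_y_def algebra_simps)
qed

lemma has_powser2_pdy: "has_powser2 c r F \<Longrightarrow> has_powser2 (diffs_y c) r (pdy F)"
  using has_powser2_pdy_at(1) unfolding has_powser2_def by blast

lemma has_powser2_pdx_pdy_commute: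
  assumes "has_powser2 c r F" "\<bar>x\<bar> < r" "\<bar>y\<bar> < r"
  shows "pdy (pdx F) (x,y) = pdx (pdy F) (x,y)"
proof -
  have "diffs_y (diffs_x c) = diffs_x (diffs_y c)" by (auto simp: fun_eq_iff diffs_x_def diffs_y_def)
  hence "((\<lambda>(i,j). diffs_x (diffs_y c) i j * x ^ i * y ^ j) has_sum pdy (pdx F) (x, y)) UNIV"
    using has_powser2_pdy_at(1)[OF has_powser2_pdx[OF assms(1)] assms(2,3)] by simp
  with has_powser2_pdx_at(1)[OF has_powser2_pdy[OF assms(1)] assms(2,3)] show ?thesis
    using has_sum_unique by blast
qed

definition cauchy_prod2 :: "(nat \<Rightarrow> nat \<Rightarrow> real) \<Rightarrow> (nat \<Rightarrow> nat \<Rightarrow> real) \<Rightarrow> nat \<Rightarrow> nat \<Rightarrow> real" where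
  "cauchy_prod2 c d i j = (\<Sum>k\<le>i. \<Sum>l\<le>j. c k l * d (i-k) (j-l))"

lemma has_sum_mult_Times:
  fixes u v :: "'a \<Rightarrow> real"
  assumes u: "(u has_sum a) A" and v: "(v has_sum b) B"
  shows "((\<lambda>(p,q). u p * v q) has_sum a*b) (A \<times> B)"
proof (rule has_sum_SigmaI[where g = "\<lambda>p. u p * b"])
  show "((\<lambda>q. (\<lambda>(p,q). u p * v q) (p, q)) has_sum u p * b) B" for p
    using has_sum_cmult_right[OF v, of "u p"] by simp
  show "((\<lambda>p. u p * b) has_sum a * b) A" using has_sum_cmult_left[OF u] by simp
  have ua: "(\<lambda>p. norm (u p)) summable_on A" and va: "(\<lambda>q. norm (v q)) summable_on B"
    using u v has_sum_imp_summable summable_on_iff_abs_summable_on_real by blast+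
  have "(\<lambda>z. norm ((\<lambda>(p,q). u p * v q) z)) summable_on Sigma A (\<lambda>_. B)"
  proof (subst Infinite_Sum.abs_summable_on_Sigma_iff, intro conjI ballI)
    show "(\<lambda>q. norm ((\<lambda>(p,q). u p * v q) (p, q))) summable_on B" for p
      using summable_on_cmult_right[OF va, of "norm (u p)"] by (simp add: abs_mult)
    have "(\<lambda>p. norm (norm (u p) * (\<Sum>\<^sub>\<infinity>q\<in>B. norm (v q)))) summable_on A"
      using summable_on_cmult_left[OF ua, of "\<Sum>\<^sub>\<infinity>q\<in>B. norm (v q)"]
      by (simp add: abs_mult infsum_nonneg)
    thus "(\<lambda>p. norm (\<Sum>\<^sub>\<infinity>q\<in>B. norm ((\<lambda>(p,q). u p * v q) (p, q)))) summable_on A"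
      by (simp add: abs_mult infsum_cmult_right')
  qed
  thus "(\<lambda>(p,q). u p * v q) summable_on Sigma A (\<lambda>_. B)" using abs_summable_summable by blast
qed

lemma cauchy_prod2_block_sum:
  "(\<Sum>(k,l)\<in>{..i} \<times> {..j}. c k l * x ^ k * y ^ l * (d (i-k) (j-l) * x ^ (i-k) * y ^ (j-l)))
     = cauchy_prod2 c d i j * x ^ i * (y::real) ^ j"
proof -
  have "(\<Sum>(k,l)\<in>{..i} \<times> {..j}. c k l * x ^ k * y ^ l * (d (i-k) (j-l) * x ^ (i-k) * y ^ (j-l)))
      = (\<Sum>k\<le>i. \<Sum>l\<le>j. c k l * d (i-k) (j-l) * x ^ i * y ^ j)"
    unfolding sum.cartesian_product[symmetric]
  proof (intro sum.cong refl)
    fix k l assume "k \<in> {..i}" "l \<in> {..j}"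
    hence "x ^ i = x ^ k * x ^ (i-k)" "y ^ j = y ^ l * y ^ (j-l)"
      by (simp_all add: power_add[symmetric])
    thus "c k l * x ^ k * y ^ l * (d (i-k) (j-l) * x ^ (i-k) * y ^ (j-l))
        = c k l * d (i-k) (j-l) * x ^ i * y ^ j" by simp
  qed
  thus ?thesis by (simp add: cauchy_prod2_def sum_distrib_right)
qed

text \<open>The product of the two absolutely summable series is regrouped along the blocks
  \<open>{(k,l). k \<le> i \<and> l \<le> j}\<close> via the bijection \<open>(p, q) \<mapsto> (p + q, p)\<close>.\<close>
lemma has_powser2_mult:
  assumes "has_powser2 c r F" "has_powser2 d r G"
  shows "has_powser2 (cauchy_prod2 c d) r (\<lambda>z. F z * G z)"
  unfolding has_powser2_def
proof (intro allI impI)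
  fix x y :: real assume "\<bar>x\<bar> < r" "\<bar>y\<bar> < r"
  define u where "u = (\<lambda>(i,j). c i j * x ^ i * y ^ j)"
  define v where "v = (\<lambda>(i,j). d i j * x ^ i * y ^ j)"
  have "(u has_sum F (x,y)) UNIV" "(v has_sum G (x,y)) UNIV"
    using assms \<open>\<bar>x\<bar> < r\<close> \<open>\<bar>y\<bar> < r\<close> by (auto simp: u_def v_def dest: has_powser2D)
  hence P: "((\<lambda>(p,q). u p * v q) has_sum F (x,y) * G (x,y)) (UNIV \<times> UNIV)"
    by (rule has_sum_mult_Times)
  define g where "g = (\<lambda>((i,j),(k,l)). u (k,l) * v (i-k, j-l))"
  have "(g has_sum F (x,y) * G (x,y)) (Sigma UNIV (\<lambda>(i,j). {..i} \<times> {..j}))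
      \<longleftrightarrow> ((\<lambda>(p,q). u p * v q) has_sum F (x,y) * G (x,y)) (UNIV \<times> UNIV)"
    by (rule has_sum_reindex_bij_witness[where i = "\<lambda>((k,l),(k',l')). ((k+k',l+l'),(k,l))"
                and j = "\<lambda>((i,j),(k,l)). ((k,l),(i-k,j-l))"])
       (auto simp: g_def split: prod.splits)
  with P have "(g has_sum F (x,y) * G (x,y)) (Sigma UNIV (\<lambda>(i,j). {..i} \<times> {..j}))" by simp
  thus "((\<lambda>(i,j). cauchy_prod2 c d i j * x ^ i * y ^ j) has_sum F (x,y) * G (x,y)) UNIV"
  proof (rule has_sum_Sigma')
    fix z :: "nat \<times> nat"
    obtain i j where z: "z = (i,j)" by force
    have "(\<Sum>w\<in>{..i} \<times> {..j}. g (z, w)) = cauchy_prod2 c d i j * x ^ i * y ^ j"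
      using cauchy_prod2_block_sum[of c x y d i j]
      by (simp add: z g_def u_def v_def case_prod_unfold)
    hence "((\<lambda>w. g (z, w)) has_sum cauchy_prod2 c d i j * x ^ i * y ^ j) ({..i} \<times> {..j})"
      by (intro has_sum_finiteI) auto
    thus "((\<lambda>w. g (z, w)) has_sum (\<lambda>(i,j). cauchy_prod2 c d i j * x ^ i * y ^ j) z)
         ((\<lambda>(i,j). {..i} \<times> {..j}) z)" by (simp add: z)
  qed
qed

section \<open>Non-characteristic uniqueness for a first order linear equation\<close>

text \<open>Coefficient \<open>(i, j)\<close> of the equation involves \<open>u\<close> only in rows \<open>\<le> j\<close>, and row \<open>j + 1\<close>
  only through \<open>q\<^sub>0\<^sub>0 (j+1) u\<^sub>i\<^sub>,\<^sub>j\<^sub>+\<^sub>1\<close> plus entries \<open>u\<^sub>i\<^sub>'\<^sub>,\<^sub>j\<^sub>+\<^sub>1\<close> with \<open>i' < i\<close>.\<close>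
lemma first_order_pde_coeffs_zero:
  assumes pde: "\<And>i j. cauchy_prod2 a u i j + cauchy_prod2 b (diffs_x u) i j
                       + cauchy_prod2 q (diffs_y u) i j = 0"
    and axis: "\<And>i. u i 0 = 0" and q0: "q 0 0 \<noteq> 0"
  shows "u i j = 0"
proof (induction j arbitrary: i rule: less_induct)
  case (less j)
  show ?case
  proof (cases j)
    case 0 thus ?thesis using axis by simp
  next
    case (Suc m)
    have low: "\<And>i' l. l \<le> m \<Longrightarrow> u i' l = 0" using less.IH Suc by auto
    show ?thesis unfolding Suc
    proof (induction i rule: less_induct)
      case (less i)
      have "cauchy_prod2 q (diffs_y u) i m
          = (\<Sum>k\<le>i. \<Sum>l\<le>m. if k = 0 then if l = 0 then q 0 0 * of_nat (Suc m) * u i (Suc m) else 0 else 0)"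
        unfolding cauchy_prod2_def
      proof (intro sum.cong refl)
        fix k l assume "k \<in> {..i}" "l \<in> {..m}"
        moreover have "u (i-k) (Suc m) = 0" if "0 < k" "k \<le> i"
          using less.IH[of "i-k"] that by simp
        moreover have "u (i-k) (Suc (m-l)) = 0" if "0 < l" "l \<le> m"
          using low that by simp
        ultimately show "q k l * diffs_y u (i - k) (m - l)
            = (if k = 0 then if l = 0 then q 0 0 * of_nat (Suc m) * u i (Suc m) else 0 else 0)"
          by (cases "l = 0") (auto simp: diffs_y_def)
      qed
      also have "\<dots> = (\<Sum>k\<le>i. if k = 0 then q 0 0 * of_nat (Suc m) * u i (Suc m) else 0)"
        by (intro sum.cong refl) simp
      finally have "cauchy_prod2 q (diffs_y u) i m = q 0 0 * of_nat (Suc m) * u i (Suc m)"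
        by simp
      moreover have "cauchy_prod2 a u i m = 0" "cauchy_prod2 b (diffs_x u) i m = 0"
        by (simp_all add: cauchy_prod2_def diffs_x_def low)
      ultimately have "q 0 0 * of_nat (Suc m) * u i (Suc m) = 0"
        using pde[of i m] by simp
      thus ?case using q0 by simp
    qed
  qed
qed

lemma has_powser2_first_order_pde_unique:
  assumes "r > 0" and \<alpha>: "has_powser2 a r \<alpha>" and \<beta>: "has_powser2 b r \<beta>" and \<kappa>: "has_powser2 q r \<kappa>"
    and U: "has_powser2 u r U" and \<kappa>0: "\<kappa> (0,0) \<noteq> 0"
    and pde: "\<And>x y. \<bar>x\<bar> < r \<Longrightarrow> \<bar>y\<bar> < r \<Longrightarrow>
               \<alpha> (x,y) * U (x,y) + \<beta> (x,y) * pdx U (x,y) + \<kappa> (x,y) * pdy U (x,y) = 0"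
    and axis: "\<And>x. \<bar>x\<bar> < r \<Longrightarrow> U (x,0) = 0"
    and "\<bar>x\<bar> < r" "\<bar>y\<bar> < r"
  shows "U (x,y) = 0"
proof -
  have "has_powser2 (\<lambda>i j. cauchy_prod2 a u i j + cauchy_prod2 b (diffs_x u) i j
                          + cauchy_prod2 q (diffs_y u) i j) r
          (\<lambda>z. \<alpha> z * U z + \<beta> z * pdx U z + \<kappa> z * pdy U z)"
    by (rule has_powser2_add[OF has_powser2_add[OF has_powser2_mult[OF \<alpha> U]
          has_powser2_mult[OF \<beta> has_powser2_pdx[OF U]]] has_powser2_mult[OF \<kappa> has_powser2_pdy[OF U]]])
  hence zero: "has_powser2 (\<lambda>i j. cauchy_prod2 a u i j + cauchy_prod2 b (diffs_x u) i j
                          + cauchy_prod2 q (diffs_y u) i j) r (\<lambda>_. 0)"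
    by (rule has_powser2_cong) (simp add: pde)
  have pde_coeffs: "cauchy_prod2 a u i j + cauchy_prod2 b (diffs_x u) i j
                     + cauchy_prod2 q (diffs_y u) i j = 0" for i j
    using has_powser2_zero_coeffs[OF zero \<open>r > 0\<close>, of i j] by simp
  have "(\<lambda>n. u n 0 * s^n) sums 0" if "\<bar>s\<bar> < r" for s
    using has_powser2_axis[OF U that] axis[OF that] by simp
  hence axis_coeffs: "u i 0 = 0" for i
    by (rule powser_sums_zero_imp_coeffs_zero[OF \<open>r > 0\<close>])
  have "u i j = 0" for i j
    by (rule first_order_pde_coeffs_zero[OF pde_coeffs axis_coeffs])
       (use \<kappa>0 has_powser2_at_origin[OF \<kappa> \<open>r > 0\<close>] in simp)
  hence "((\<lambda>(i,j). u i j * x ^ i * y ^ j) has_sum 0) UNIV"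
    by (simp add: case_prod_unfold)
  with has_powser2D[OF U \<open>\<bar>x\<bar> < r\<close> \<open>\<bar>y\<bar> < r\<close>] show ?thesis
    using has_sum_unique by blast
qed

section \<open>The germs \<open>A_F\<close> and \<open>B_F\<close>\<close>

lemma A_F_in_terms_of_B_F:
  assumes F: "has_powser2 c r f" and x: "\<bar>x\<bar> < r" and y: "\<bar>y\<bar> < r"
  shows "A_F f (x,y) = (pdx (pdx f) (x,y) + pdy (pdy f) (x,y)) * B_F f (x,y)
           - 1/2 * (pdx f (x,y) * pdx (B_F f) (x,y) + pdy f (x,y) * pdy (B_F f) (x,y))"
proof -
  note P = has_powser2_pdx[OF F] and Q = has_powser2_pdy[OF F]
  have "((\<lambda>s. 1 - (pdx f (s,y))\<^sup>2 - (pdy f (s,y))\<^sup>2) has_real_derivative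
          -2 * (pdx f (x,y) * pdx (pdx f) (x,y) + pdy f (x,y) * pdx (pdy f) (x,y))) (at x)"
    using has_powser2_pdx_at(2)[OF P x y] has_powser2_pdx_at(2)[OF Q x y]
    by (auto intro!: derivative_eq_intros simp: algebra_simps)
  hence Bx: "pdx (B_F f) (x,y) = -2 * (pdx f (x,y) * pdx (pdx f) (x,y) + pdy f (x,y) * pdx (pdy f) (x,y))"
    unfolding pdx_def B_F_def by (simp add: DERIV_imp_deriv)
  have "((\<lambda>t. 1 - (pdx f (x,t))\<^sup>2 - (pdy f (x,t))\<^sup>2) has_real_derivative
          -2 * (pdx f (x,y) * pdy (pdx f) (x,y) + pdy f (x,y) * pdy (pdy f) (x,y))) (at y)"
    using has_powser2_pdy_at(2)[OF P x y] has_powser2_pdy_at(2)[OF Q x y]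
    by (auto intro!: derivative_eq_intros simp: algebra_simps)
  hence By: "pdy (B_F f) (x,y) = -2 * (pdx f (x,y) * pdy (pdx f) (x,y) + pdy f (x,y) * pdy (pdy f) (x,y))"
    unfolding pdy_def B_F_def by (simp add: DERIV_imp_deriv)
  show ?thesis
    unfolding Bx By A_F_def B_F_def has_powser2_pdx_pdy_commute[OF F x y]
    by (simp add: algebra_simps power2_eq_square)
qed

lemma eventually_nhds_origin_square:
  "eventually P (nhds (0::real, 0::real)) \<longleftrightarrow> (\<exists>e>0. \<forall>x y. \<bar>x\<bar> < e \<longrightarrow> \<bar>y\<bar> < e \<longrightarrow> P (x,y))"
proof
  assume "eventually P (nhds (0, 0))"
  then obtain d where d: "d > 0" "\<And>z. dist z (0,0) < d \<Longrightarrow> P z"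
    unfolding eventually_nhds_metric by blast
  have "P (x,y)" if "\<bar>x\<bar> < d/2" "\<bar>y\<bar> < d/2" for x y
  proof (rule d(2))
    have "dist (x,y) (0,0) = sqrt (x\<^sup>2 + y\<^sup>2)" by (simp add: dist_Pair_Pair dist_real_def)
    also have "\<dots> \<le> \<bar>x\<bar> + \<bar>y\<bar>"
      by (rule real_le_lsqrt) (auto simp: power2_eq_square abs_mult_self_eq algebra_simps)
    finally show "dist (x,y) (0,0) < d" using that by linarith
  qed
  thus "\<exists>e>0. \<forall>x y. \<bar>x\<bar> < e \<longrightarrow> \<bar>y\<bar> < e \<longrightarrow> P (x,y)" using d(1) by (intro exI[of _ "d/2"]) auto
next
  assume "\<exists>e>0. \<forall>x y. \<bar>x\<bar> < e \<longrightarrow> \<bar>y\<bar> < e \<longrightarrow> P (x,y)"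
  then obtain e where "e > 0" "\<And>x y. \<bar>x\<bar> < e \<Longrightarrow> \<bar>y\<bar> < e \<Longrightarrow> P (x,y)" by blast
  moreover have "\<bar>fst z\<bar> < e" "\<bar>snd z\<bar> < e" if "dist z (0,0) < e" for z :: "real \<times> real"
    using that dist_fst_le[of z "(0,0)"] dist_snd_le[of z "(0,0)"] by (auto simp: dist_real_def)
  ultimately show "eventually P (nhds (0, 0))"
    unfolding eventually_nhds_metric by (metis prod.collapse)
qed

lemma eventually_nhds_origin_axis:
  "eventually P (nhds (0::real, 0::real)) \<Longrightarrow> eventually (\<lambda>x. P (x,0)) (nhds 0)"
  by (rule eventually_compose_filterlim[where f = "\<lambda>x. (x, 0::real)"])
     (auto intro!: tendsto_Pair filterlim_ident)

lemma partials_zero_if_eventually_zero: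
  assumes "eventually (\<lambda>q. g q = 0) (nhds (x,y))"
  shows "pdx g (x,y) = 0" and "pdy g (x,y) = 0"
proof -
  have "eventually (\<lambda>s. g (s,y) = 0) (nhds x)"
    by (rule eventually_compose_filterlim[OF assms]) (auto intro!: tendsto_Pair filterlim_ident)
  then show "pdx g (x,y) = 0"
    unfolding pdx_def using deriv_cong_ev[of _ "\<lambda>_. 0"] by fastforce
  have "eventually (\<lambda>t. g (x,t) = 0) (nhds y)"
    by (rule eventually_compose_filterlim[OF assms]) (auto intro!: tendsto_Pair filterlim_ident)
  then show "pdy g (x,y) = 0"
    unfolding pdy_def using deriv_cong_ev[of _ "\<lambda>_. 0"] by fastforce
qed

lemma eventually_A_F_zero_if_B_F_zero:
  assumes N: "normalized_germ f" and B: "\<forall>\<^sub>F p in nhds (0,0). B_F f p = 0"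
  shows "\<forall>\<^sub>F p in nhds (0,0). A_F f p = 0"
proof -
  obtain r c where "r > 0" and F: "has_powser2 c r f"
    using N real_analytic_at2_origin_has_powser2 unfolding normalized_germ_def by blast
  hence "\<forall>\<^sub>F p in nhds (0,0). \<bar>fst p\<bar> < r \<and> \<bar>snd p\<bar> < r"
    unfolding eventually_nhds_origin_square by auto
  moreover have "\<forall>\<^sub>F p in nhds (0,0). \<forall>\<^sub>F q in nhds p. B_F f q = 0"
    using B by (simp add: eventually_eventually)
  ultimately show ?thesis
  proof eventually_elim
    case (elim p)
    obtain x y where p: "p = (x,y)" by force
    have "B_F f (x,y) = 0" "pdx (B_F f) (x,y) = 0" "pdy (B_F f) (x,y) = 0"
      using elim eventually_nhds_x_imp_x partials_zero_if_eventually_zero unfolding p by blast+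
    with elim show ?case
      unfolding p using A_F_in_terms_of_B_F[OF F, of x y] by simp
  qed
qed

lemma eventually_B_F_zero_if_A_F_zero:
  assumes N: "normalized_germ f" and A: "\<forall>\<^sub>F p in nhds (0,0). A_F f p = 0"
    and axis: "\<forall>\<^sub>F x in nhds 0. B_F f (x,0) = 0"
  shows "\<forall>\<^sub>F p in nhds (0,0). B_F f p = 0"
proof -
  obtain r0 c where "r0 > 0" and F0: "has_powser2 c r0 f"
    using N real_analytic_at2_origin_has_powser2 unfolding normalized_germ_def by blast
  obtain e1 where "e1 > 0" and e1: "\<And>x y. \<bar>x\<bar> < e1 \<Longrightarrow> \<bar>y\<bar> < e1 \<Longrightarrow> A_F f (x,y) = 0"
    using A unfolding eventually_nhds_origin_square by blast
  obtain e2 where "e2 > 0" and e2: "\<And>x. \<bar>x\<bar> < e2 \<Longrightarrow> B_F f (x,0) = 0"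
    using axis unfolding eventually_nhds_metric by (auto simp: dist_real_def)
  define r where "r = min r0 (min e1 e2)"
  have "r > 0" using \<open>r0 > 0\<close> \<open>e1 > 0\<close> \<open>e2 > 0\<close> by (simp add: r_def)
  have F: "has_powser2 c r f" using has_powser2_mono[OF F0] by (simp add: r_def)
  note P = has_powser2_pdx[OF F] and Q = has_powser2_pdy[OF F]
  have Bser: "has_powser2 (\<lambda>i j. one_coeffs2 i j - cauchy_prod2 (diffs_x c) (diffs_x c) i j
          - cauchy_prod2 (diffs_y c) (diffs_y c) i j) r (B_F f)"
    by (rule has_powser2_cong[OF has_powser2_diff[OF has_powser2_diff[OF has_powser2_one
              has_powser2_mult[OF P P]] has_powser2_mult[OF Q Q]]])
       (simp add: B_F_def power2_eq_square)
  have Lser: "has_powser2 (\<lambda>i j. diffs_x (diffs_x c) i j + diffs_y (diffs_y c) i j) r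
                   (\<lambda>z. pdx (pdx f) z + pdy (pdy f) z)"
    by (rule has_powser2_add[OF has_powser2_pdx[OF P] has_powser2_pdy[OF Q]])
  have "- 1/2 * pdy f (0,0) \<noteq> 0"
    using N by (simp add: normalized_germ_def)
  moreover have "(pdx (pdx f) (x,y) + pdy (pdy f) (x,y)) * B_F f (x,y)
      + (- 1/2 * pdx f (x,y)) * pdx (B_F f) (x,y) + (- 1/2 * pdy f (x,y)) * pdy (B_F f) (x,y) = 0"
    if "\<bar>x\<bar> < r" "\<bar>y\<bar> < r" for x y
    using A_F_in_terms_of_B_F[OF F that] e1[of x y] that by (simp add: r_def)
  moreover have "B_F f (x,0) = 0" if "\<bar>x\<bar> < r" for x
    using e2 that by (simp add: r_def)
  ultimately have "B_F f (x,y) = 0" if "\<bar>x\<bar> < r" "\<bar>y\<bar> < r" for x y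
    by (rule has_powser2_first_order_pde_unique[OF \<open>r > 0\<close> Lser has_powser2_cmult[OF P]
          has_powser2_cmult[OF Q] Bser _ _ _ that])
  thus ?thesis
    unfolding eventually_nhds_origin_square using \<open>r > 0\<close> by (intro exI[of _ r]) auto
qed

section \<open>The boundary curve \<open>\<gamma>_F\<close>\<close>

lemma eventually_axis_slopes:
  assumes N: "normalized_germ f"
  shows "\<forall>\<^sub>F x in nhds 0. 0 < pdy f (x,0) \<and> (pdx f (x,0))\<^sup>2 < 1"
proof -
  obtain r c where "r > 0" and F: "has_powser2 c r f"
    using N real_analytic_at2_origin_has_powser2 unfolding normalized_germ_def by blast
  have "((\<lambda>s. pdx f (s,0)) has_real_derivative pdx (pdx f) (0,0)) (at 0)"
       "((\<lambda>s. pdy f (s,0)) has_real_derivative pdx (pdy f) (0,0)) (at 0)"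
    using has_powser2_pdx_at(2)[OF has_powser2_pdx[OF F]] has_powser2_pdx_at(2)[OF has_powser2_pdy[OF F]]
      \<open>r > 0\<close> by simp_all
  hence "isCont (\<lambda>s. pdx f (s,0)) 0" "isCont (\<lambda>s. pdy f (s,0)) 0"
    by (simp_all add: DERIV_isCont)
  hence lim: "((\<lambda>s. pdx f (s,0)) \<longlongrightarrow> 0) (at 0)" "((\<lambda>s. pdy f (s,0)) \<longlongrightarrow> 1) (at 0)"
    using N by (simp_all add: normalized_germ_def isCont_def)
  have "\<forall>\<^sub>F x in at 0. (pdx f (x,0))\<^sup>2 < 1"
    using order_tendstoD(2)[OF tendsto_power[OF lim(1), of 2], of 1] by simp
  moreover have "\<forall>\<^sub>F x in at 0. 0 < pdy f (x,0)"
    using order_tendstoD(1)[OF lim(2), of 0] by simp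
  ultimately have "\<forall>\<^sub>F x in at 0. 0 < pdy f (x,0) \<and> (pdx f (x,0))\<^sup>2 < 1"
    by (simp add: eventually_conj)
  thus ?thesis
    using N by (simp add: eventually_nhds_conv_at normalized_germ_def)
qed

lemma in_C_omega_02_axis:
  assumes N: "normalized_germ f"
  shows "in_C_omega_02 (\<lambda>x. f (x,0))"
proof -
  obtain r c where "r > 0" and F: "has_powser2 c r f"
    using N real_analytic_at2_origin_has_powser2 unfolding normalized_germ_def by blast
  hence "real_analytic_at1 (\<lambda>x. f (x,0)) 0"
    unfolding real_analytic_at1_def
    by (auto intro!: exI[of _ r] exI[of _ "\<lambda>n. c n 0"] intro: has_powser2_axis[OF F])
  thus ?thesis
    using N by (simp add: in_C_omega_02_def normalized_germ_def pdx_def)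
qed

lemma gamma_F_shape_iff_B_F_axis:
  assumes N: "normalized_germ f"
  shows "(\<exists>\<psi>. in_C_omega_02 \<psi> \<and> (\<forall>\<^sub>F x in nhds 0. gamma_F f x = (\<psi> x, sqrt (1 - (deriv \<psi> x)\<^sup>2))))
         \<longleftrightarrow> (\<forall>\<^sub>F x in nhds 0. B_F f (x,0) = 0)"
proof
  assume "\<exists>\<psi>. in_C_omega_02 \<psi> \<and> (\<forall>\<^sub>F x in nhds 0. gamma_F f x = (\<psi> x, sqrt (1 - (deriv \<psi> x)\<^sup>2)))"
  then obtain \<psi> where G: "\<forall>\<^sub>F x in nhds 0. gamma_F f x = (\<psi> x, sqrt (1 - (deriv \<psi> x)\<^sup>2))"
    by blast
  have "\<forall>\<^sub>F x in nhds 0. \<forall>\<^sub>F s in nhds x. \<psi> s = f (s,0)"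
    using G unfolding eventually_eventually by (rule eventually_mono) (simp add: gamma_F_def)
  hence "\<forall>\<^sub>F x in nhds 0. deriv \<psi> x = pdx f (x,0)"
    by (rule eventually_mono) (simp add: pdx_def deriv_cong_ev)
  with G eventually_axis_slopes[OF N] show "\<forall>\<^sub>F x in nhds 0. B_F f (x,0) = 0"
  proof eventually_elim
    case (elim x)
    hence "pdy f (x,0) = sqrt (1 - (pdx f (x,0))\<^sup>2)" "(pdx f (x,0))\<^sup>2 < 1"
      by (simp_all add: gamma_F_def)
    thus ?case by (simp add: B_F_def)
  qed
next
  assume "\<forall>\<^sub>F x in nhds 0. B_F f (x,0) = 0"
  hence "\<forall>\<^sub>F x in nhds 0. gamma_F f x = (f (x,0), sqrt (1 - (deriv (\<lambda>s. f (s,0)) x)\<^sup>2))"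
    using eventually_axis_slopes[OF N]
  proof eventually_elim
    case (elim x)
    hence "1 - (pdx f (x,0))\<^sup>2 = (pdy f (x,0))\<^sup>2" "0 < pdy f (x,0)"
      by (simp_all add: B_F_def)
    thus ?case by (simp add: gamma_F_def pdx_def)
  qed
  thus "\<exists>\<psi>. in_C_omega_02 \<psi> \<and> (\<forall>\<^sub>F x in nhds 0. gamma_F f x = (\<psi> x, sqrt (1 - (deriv \<psi> x)\<^sup>2)))"
    using in_C_omega_02_axis[OF N] by blast
qed

theorem corollary2p5:
  fixes f :: "real \<times> real \<Rightarrow> real"
  shows "in_Lambda f \<longleftrightarrow>
    (in_Z f \<and> (\<exists>\<psi>. in_C_omega_02 \<psi> \<and>
       (\<forall>\<^sub>F x in nhds 0. gamma_F f x = (\<psi> x, sqrt (1 - (deriv \<psi> x)\<^sup>2)))))"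
proof
  assume "in_Lambda f"
  hence N: "normalized_germ f" and B: "\<forall>\<^sub>F p in nhds (0,0). B_F f p = 0"
    by (auto simp: in_Lambda_def)
  have "in_Z f"
    using N eventually_A_F_zero_if_B_F_zero[OF N B] by (simp add: in_Z_def)
  with gamma_F_shape_iff_B_F_axis[OF N] eventually_nhds_origin_axis[OF B]
  show "in_Z f \<and> (\<exists>\<psi>. in_C_omega_02 \<psi> \<and>
       (\<forall>\<^sub>F x in nhds 0. gamma_F f x = (\<psi> x, sqrt (1 - (deriv \<psi> x)\<^sup>2))))" by blast
next
  assume Z: "in_Z f \<and> (\<exists>\<psi>. in_C_omega_02 \<psi> \<and>
       (\<forall>\<^sub>F x in nhds 0. gamma_F f x = (\<psi> x, sqrt (1 - (deriv \<psi> x)\<^sup>2))))"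
  hence N: "normalized_germ f" and A: "\<forall>\<^sub>F p in nhds (0,0). A_F f p = 0"
    by (auto simp: in_Z_def)
  have "\<forall>\<^sub>F x in nhds 0. B_F f (x,0) = 0"
    using Z gamma_F_shape_iff_B_F_axis[OF N] by blast
  with N show "in_Lambda f"
    using eventually_B_F_zero_if_A_F_zero[OF N A] by (simp add: in_Lambda_def)
qed

end
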